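(* Let $X$ be a separable real Banach space. (a) If $X$ has property (au$^*$), then $X$ has property (au). (b) If $X$ is reflexive, then $X$ has property (au$^*$) if and only if $X$ has property (au).
   Context: All Banach spaces are real. A separable Banach space $X$ has property (au) if for every $x\in X$ and $\delta>0$ there is a closed subspace $W\subseteq X$ of finite codimension such that $\|x-w\|\le(1+\delta)\|x+w\|$ for all $w\in W$. A separable Banach space $X$ has property (au$^*$) if $\lim_{n\to\infty}(\|x^*+x_n^*\|-\|x^*-x_n^*\|)=0$ whenever $x^*\in X^*$ and $(x_n^* )_{n\ge1}$ is a weak$^*$-null sequence in $X^*$. *)

theory Defs
  imports "HOL-Analysis.Analysis"
begin

text \<open>The dual space X* is modelled by the type of bounded linear functionals
  \<open>'a \<Rightarrow>\<^sub>L real\<close> with the operator norm.\<close>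

definition separable_space :: "'a::metric_space itself \<Rightarrow> bool" where
  "separable_space _ \<longleftrightarrow> (\<exists>D::'a set. countable D \<and> closure D = UNIV)"

definition finite_codim :: "'a::real_vector set \<Rightarrow> bool" where
  "finite_codim W \<longleftrightarrow> (\<exists>F. finite F \<and> span (W \<union> F) = UNIV)"

definition weak_star_null :: "(nat \<Rightarrow> ('a::real_normed_vector \<Rightarrow>\<^sub>L real)) \<Rightarrow> bool" where
  "weak_star_null f \<longleftrightarrow> (\<forall>x. (\<lambda>n. blinfun_apply (f n) x) \<longlonglongrightarrow> 0)"

definition property_au :: "'a::real_normed_vector itself \<Rightarrow> bool" where
  "property_au _ \<longleftrightarrow>
     (\<forall>(x::'a) \<delta>. \<delta> > 0 \<longrightarrow>
        (\<exists>W. subspace W \<and> closed W \<and> finite_codim W \<and>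
             (\<forall>w\<in>W. norm (x - w) \<le> (1 + \<delta>) * norm (x + w))))"

definition property_au_star :: "'a::real_normed_vector itself \<Rightarrow> bool" where
  "property_au_star _ \<longleftrightarrow>
     (\<forall>(xs :: 'a \<Rightarrow>\<^sub>L real) (f :: nat \<Rightarrow> ('a \<Rightarrow>\<^sub>L real)). weak_star_null f \<longrightarrow>
        (\<lambda>n. norm (xs + f n) - norm (xs - f n)) \<longlonglongrightarrow> 0)"

definition reflexive_space :: "'a::real_normed_vector itself \<Rightarrow> bool" where
  "reflexive_space _ \<longleftrightarrow>
     (\<forall>\<phi> :: ('a \<Rightarrow>\<^sub>L real) \<Rightarrow>\<^sub>L real. \<exists>x::'a. \<forall>f. blinfun_apply \<phi> f = blinfun_apply f x)"

end

theory Submission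
  imports Defs
begin

text \<open>
  (a) If (au) fails at \<open>x\<close> and \<open>\<delta>\<close>, every closed finite-codimensional subspace, in particular every
  common kernel of finitely many functionals, contains a "bad" \<open>w\<close> with
  \<open>(1 + \<delta>) \<parallel>x + w\<parallel> < \<parallel>x - w\<parallel>\<close>.  Norming functionals of \<open>x - w\<close> (Hahn--Banach) have a weak\<open>*\<close>
  cluster point \<open>z\<close> (Banach--Alaoglu); separability yields a sequence \<open>h_n \<rightarrow> z\<close> weak\<open>*\<close> norming
  \<open>x - w_n\<close> with \<open>z(w_n) = 0\<close>.  (au\<open>*\<close>) for \<open>z\<close> and \<open>h_n - z\<close> bounds \<open>\<parallel>2z - h_n\<parallel>\<close> by about 1, and testing
  \<open>2z - h_n\<close> on \<open>x + w_n\<close> contradicts badness.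
  (b) If \<open>\<parallel>x* + f_n\<parallel> - \<parallel>x* - f_n\<parallel> \<ge> \<epsilon>\<close> infinitely often, take unit vectors \<open>x_n\<close> nearly norming
  \<open>x* + f_n\<close> and a weak cluster point \<open>x\<close> (reflexivity).  The (au) subspace at \<open>x\<close> is complemented by a
  finite rank operator, so \<open>x_n - x\<close> is close to a vector \<open>v\<close> with \<open>\<parallel>x - v\<parallel> \<le> (1 + \<delta>)\<parallel>x + v\<parallel>\<close>;
  evaluating \<open>x* - f_n\<close> at \<open>x - v\<close> bounds \<open>\<parallel>x* + f_n\<parallel>\<close> by \<open>\<parallel>x* - f_n\<parallel> + \<epsilon>/2\<close>.
\<close>

text \<open>The closed unit ball of the algebraic dual, viewed inside the space of all real
  functions with the product (pointwise) topology: on it this topology is the weak\<open>*\<close> topology.\<close>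
definition dual_ball :: "('b::real_normed_vector \<Rightarrow> real) set" where
  "dual_ball = {\<phi>. linear \<phi> \<and> (\<forall>y. \<bar>\<phi> y\<bar> \<le> norm y)}"

text \<open>Hahn--Banach via Zorn's lemma.  A linear functional defined on a subspace and dominated
  by the norm is represented by its graph, a subspace of \<open>X \<times> \<real>\<close>.\<close>
definition dominated_graph :: "('a::real_normed_vector \<times> real) set \<Rightarrow> bool" where
  "dominated_graph G \<longleftrightarrow> subspace G \<and> (\<forall>v s t. (v, s) \<in> G \<longrightarrow> (v, t) \<in> G \<longrightarrow> s = t)
     \<and> (\<forall>v t. (v, t) \<in> G \<longrightarrow> t \<le> norm v)"

lemma dominated_graph_line: "dominated_graph (range (\<lambda>a. (a *\<^sub>R y, a * norm y)))"
proof -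
  have "range (\<lambda>a. (a *\<^sub>R y, a * norm y)) = span {(y, norm y)}"
    by (simp add: span_singleton)
  then have "subspace (range (\<lambda>a. (a *\<^sub>R y, a * norm y)))"
    by (simp only: subspace_span)
  moreover have "\<forall>v s t. (v, s) \<in> range (\<lambda>a. (a *\<^sub>R y, a * norm y)) \<longrightarrow>
      (v, t) \<in> range (\<lambda>a. (a *\<^sub>R y, a * norm y)) \<longrightarrow> s = t"
    by (clarsimp; metis mult_eq_0_iff norm_eq_zero scaleR_cancel_right)
  moreover have "\<forall>v t. (v, t) \<in> range (\<lambda>a. (a *\<^sub>R y, a * norm y)) \<longrightarrow> t \<le> norm v"
    by (auto simp: abs_mult intro!: mult_right_mono)
  ultimately show ?thesis unfolding dominated_graph_def by blast
qed

lemma dominated_graph_chain_Union: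
  assumes "C \<noteq> {}" and dom: "\<And>G. G \<in> C \<Longrightarrow> dominated_graph G"
    and chain: "\<And>G H. G \<in> C \<Longrightarrow> H \<in> C \<Longrightarrow> G \<subseteq> H \<or> H \<subseteq> G"
  shows "dominated_graph (\<Union>C)"
proof -
  have sub: "subspace G" if "G \<in> C" for G using dom[OF that] by (simp add: dominated_graph_def)
  have "subspace (\<Union>C)" unfolding subspace_def
  proof (intro conjI ballI allI)
    show "0 \<in> \<Union>C" using \<open>C \<noteq> {}\<close> sub subspace_0 by blast
  next
    fix p q assume "p \<in> \<Union>C" "q \<in> \<Union>C"
    then obtain G H where GH: "G \<in> C" "H \<in> C" "p \<in> G" "q \<in> H" by blast
    from chain[OF GH(1,2)] show "p + q \<in> \<Union>C"
    proof
      assume "G \<subseteq> H"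
      then have "p + q \<in> H" using GH by (intro subspace_add[OF sub[OF GH(2)]]) auto
      then show ?thesis using GH(2) by blast
    next
      assume "H \<subseteq> G"
      then have "p + q \<in> G" using GH by (intro subspace_add[OF sub[OF GH(1)]]) auto
      then show ?thesis using GH(1) by blast
    qed
  next
    fix c p assume "p \<in> \<Union>C"
    then obtain G where "G \<in> C" "p \<in> G" by blast
    then show "c *\<^sub>R p \<in> \<Union>C" using subspace_scale[OF sub] by blast
  qed
  moreover have "s = t" if vs: "(v, s) \<in> \<Union>C" and vt: "(v, t) \<in> \<Union>C" for v s t
  proof -
    obtain G where G: "G \<in> C" "(v, s) \<in> G" using vs by blast
    obtain H where H: "H \<in> C" "(v, t) \<in> H" using vt by blast
    note GH = G(1) H(1) G(2) H(2)
    with chain[OF GH(1,2)] dom[OF GH(1)] dom[OF GH(2)] show ?thesis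
      unfolding dominated_graph_def by blast
  qed
  moreover have "t \<le> norm v" if "(v, t) \<in> \<Union>C" for v t
    using that dom unfolding dominated_graph_def by blast
  ultimately show ?thesis unfolding dominated_graph_def by blast
qed

text \<open>The one-step extension to \<open>z\<close>: a value \<open>c\<close> for \<open>z\<close> is admissible iff it lies between
  the two bounds below, and such \<open>c\<close> exists because the graph is dominated.\<close>
lemma dominated_graph_extension_constant:
  assumes "dominated_graph M"
  obtains c where "\<And>u s. (u, s) \<in> M \<Longrightarrow> s - norm (u - z) \<le> c"
    and "\<And>v t. (v, t) \<in> M \<Longrightarrow> c \<le> norm (v + z) - t"
proof -
  have Msub: "subspace M" and Mb: "\<And>v t. (v, t) \<in> M \<Longrightarrow> t \<le> norm v"
    using assms by (auto simp: dominated_graph_def)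
  have sep: "s - norm (u - z) \<le> norm (v + z) - t" if "(u, s) \<in> M" "(v, t) \<in> M" for u s v t
  proof -
    have "(u + v, s + t) \<in> M" using subspace_add[OF Msub that] by simp
    then have "s + t \<le> norm (u + v)" by (rule Mb)
    also have "\<dots> \<le> norm (u - z) + norm (v + z)"
      using norm_triangle_ineq[of "u - z" "v + z"] by simp
    finally show ?thesis by simp
  qed
  define L where "L = {s - norm (u - z) | u s. (u, s) \<in> M}"
  have "(0, 0) \<in> M" using subspace_0[OF Msub] by (simp add: zero_prod_def)
  then have "L \<noteq> {}" "bdd_above L" unfolding L_def bdd_above_def using sep by blast+
  show ?thesis
  proof (rule that)
    show "s - norm (u - z) \<le> Sup L" if "(u, s) \<in> M" for u s
      using \<open>bdd_above L\<close> that by (auto intro!: cSup_upper simp: L_def)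
    show "Sup L \<le> norm (v + z) - t" if "(v, t) \<in> M" for v t
      using \<open>L \<noteq> {}\<close> sep that by (auto intro!: cSup_least simp: L_def)
  qed
qed

text \<open>With an admissible \<open>c\<close>, the extended functional is still dominated (split on the sign of \<open>a\<close>).\<close>
lemma dominated_graph_extension_bound:
  assumes M: "dominated_graph M" and "(v, t) \<in> M"
    and c1: "\<And>u s. (u, s) \<in> M \<Longrightarrow> s - norm (u - z) \<le> c"
    and c2: "\<And>v t. (v, t) \<in> M \<Longrightarrow> c \<le> norm (v + z) - t"
  shows "t + a * c \<le> norm (v + a *\<^sub>R z)"
proof -
  have Msub: "subspace M" and Mb: "\<And>v t. (v, t) \<in> M \<Longrightarrow> t \<le> norm v"
    using M by (auto simp: dominated_graph_def)
  have scaled: "(r *\<^sub>R v, r * t) \<in> M" for r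
    using subspace_scale[OF Msub \<open>(v, t) \<in> M\<close>, of r] by simp
  consider "a = 0" | "a > 0" | "a < 0" by linarith
  then show ?thesis
  proof cases
    case 1 then show ?thesis using Mb[OF \<open>(v, t) \<in> M\<close>] by simp
  next
    case 2
    have "a * c \<le> a * (norm (inverse a *\<^sub>R v + z) - inverse a * t)"
      using c2[OF scaled[of "inverse a"]] 2 by (intro mult_left_mono) auto
    also have "\<dots> = norm (a *\<^sub>R (inverse a *\<^sub>R v + z)) - t"
      using 2 by (simp add: right_diff_distrib)
    also have "a *\<^sub>R (inverse a *\<^sub>R v + z) = v + a *\<^sub>R z"
      using 2 by (simp add: scaleR_add_right)
    finally show ?thesis by simp
  next
    case 3
    define b where "b = - a"
    have b: "b > 0" using 3 by (simp add: b_def)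
    have eq: "b *\<^sub>R (inverse b *\<^sub>R v - z) = v + a *\<^sub>R z"
      using b by (simp add: algebra_simps b_def)
    have "t - norm (v + a *\<^sub>R z) = b * (inverse b * t - norm (inverse b *\<^sub>R v - z))"
      unfolding eq[symmetric] using b by (simp add: right_diff_distrib)
    also have "\<dots> \<le> b * c"
      using c1[OF scaled[of "inverse b"]] b by (intro mult_left_mono) auto
    finally have "t - norm (v + a *\<^sub>R z) \<le> b * c" .
    moreover have "b * c = - (a * c)" by (simp add: b_def)
    ultimately show ?thesis by linarith
  qed
qed

lemma mem_sum_span_pair_iff:
  fixes M :: "('a::real_vector \<times> real) set"
  shows "(w, s) \<in> {p + q | p q. p \<in> M \<and> q \<in> span {(z, c)}} \<longleftrightarrow>
    (\<exists>v t a. (v, t) \<in> M \<and> w = v + a *\<^sub>R z \<and> s = t + a * c)"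
proof
  assume "(w, s) \<in> {p + q | p q. p \<in> M \<and> q \<in> span {(z, c)}}"
  then obtain p a where "p \<in> M" "(w, s) = p + a *\<^sub>R (z, c)" unfolding span_singleton by blast
  then show "\<exists>v t a. (v, t) \<in> M \<and> w = v + a *\<^sub>R z \<and> s = t + a * c" by (cases p) auto
next
  assume "\<exists>v t a. (v, t) \<in> M \<and> w = v + a *\<^sub>R z \<and> s = t + a * c"
  then obtain v t a where "(v, t) \<in> M" "w = v + a *\<^sub>R z" "s = t + a * c" by blast
  then have "(w, s) = (v, t) + a *\<^sub>R (z, c)" by simp
  then show "(w, s) \<in> {p + q | p q. p \<in> M \<and> q \<in> span {(z, c)}}"
    unfolding span_singleton using \<open>(v, t) \<in> M\<close> by blast
qed

lemma dominated_graph_extend: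
  assumes M: "dominated_graph M" and nz: "\<nexists>t. (z, t) \<in> M"
  shows "\<exists>M'. dominated_graph M' \<and> M \<subseteq> M' \<and> (\<exists>t. (z, t) \<in> M')"
proof -
  have Msub: "subspace M" and Mfun: "\<And>v s t. (v, s) \<in> M \<Longrightarrow> (v, t) \<in> M \<Longrightarrow> s = t"
    using M by (auto simp: dominated_graph_def)
  obtain c where c1: "\<And>u s. (u, s) \<in> M \<Longrightarrow> s - norm (u - z) \<le> c"
    and c2: "\<And>v t. (v, t) \<in> M \<Longrightarrow> c \<le> norm (v + z) - t"
    using dominated_graph_extension_constant[OF M] by blast
  define M' where "M' = {p + q | p q. p \<in> M \<and> q \<in> span {(z, c)}}"
  have M'_iff: "(w, s) \<in> M' \<longleftrightarrow> (\<exists>v t a. (v, t) \<in> M \<and> w = v + a *\<^sub>R z \<and> s = t + a * c)"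
    for w s unfolding M'_def by (rule mem_sum_span_pair_iff)
  have sub: "subspace M'" unfolding M'_def by (intro subspace_sums Msub subspace_span)
  have single: "s = s'" if ws: "(w, s) \<in> M'" and ws': "(w, s') \<in> M'" for w s s'
  proof -
    obtain v t a where V: "(v, t) \<in> M" "w = v + a *\<^sub>R z" "s = t + a * c"
      using ws unfolding M'_iff by blast
    obtain v' t' a' where V': "(v', t') \<in> M" "w = v' + a' *\<^sub>R z" "s' = t' + a' * c"
      using ws' unfolding M'_iff by blast
    have diff: "(v - v', t - t') \<in> M" using subspace_diff[OF Msub V(1) V'(1)] by simp
    have "a = a'"
    proof (rule ccontr)
      assume "a \<noteq> a'"
      have "v - v' = (a' - a) *\<^sub>R z" using V(2) V'(2) by (simp add: algebra_simps)
      then have "(z, inverse (a' - a) * (t - t')) \<in> M"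
        using subspace_scale[OF Msub diff, of "inverse (a' - a)"] \<open>a \<noteq> a'\<close> by simp
      then show False using nz by blast
    qed
    then have "v = v'" using V(2) V'(2) by simp
    then show ?thesis using V V' Mfun \<open>a = a'\<close> by blast
  qed
  have bound: "s \<le> norm w" if ws: "(w, s) \<in> M'" for w s
  proof -
    obtain v t a where "(v, t) \<in> M" "w = v + a *\<^sub>R z" "s = t + a * c"
      using ws unfolding M'_iff by blast
    then show ?thesis using dominated_graph_extension_bound[OF M _ c1 c2] by blast
  qed
  have dom': "dominated_graph M'" unfolding dominated_graph_def
  proof (intro conjI allI impI)
    show "subspace M'" by (fact sub)
    show "s = t" if "(v, s) \<in> M'" "(v, t) \<in> M'" for v s t using single that .
    show "t \<le> norm v" if "(v, t) \<in> M'" for v t using bound that .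
  qed
  have sup: "M \<subseteq> M'"
  proof (rule subrelI)
    fix v t assume "(v, t) \<in> M"
    then show "(v, t) \<in> M'" unfolding M'_iff by (intro exI[of _ v] exI[of _ t] exI[of _ 0]) simp
  qed
  have zc: "(z, c) \<in> M'"
    using subspace_0[OF Msub] unfolding M'_iff zero_prod_def
    by (intro exI[of _ 0] exI[of _ 0] exI[of _ 1]) simp
  show ?thesis using dom' sup zc by (intro exI[of _ M'] conjI exI[of _ c])
qed

lemma norming_functional:
  fixes y :: "'a::real_normed_vector"
  shows "\<exists>h\<in>dual_ball. h y = norm y"
proof -
  define A where "A = {G :: ('a \<times> real) set. dominated_graph G \<and> (y, norm y) \<in> G}"
  have line: "range (\<lambda>a. (a *\<^sub>R y, a * norm y)) \<in> A"
    unfolding A_def using dominated_graph_line by (auto intro: image_eqI[where x=1])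
  have chains: "\<exists>U\<in>A. \<forall>G\<in>C. G \<subseteq> U" if "subset.chain A C" for C
  proof (cases "C = {}")
    case True
    show ?thesis using True by (intro bexI[OF _ line]) simp
  next
    case False
    have CA: "C \<subseteq> A" and tot: "\<And>G H. G \<in> C \<Longrightarrow> H \<in> C \<Longrightarrow> G \<subseteq> H \<or> H \<subseteq> G"
      using that by (auto simp: subset_chain_def)
    have "dominated_graph (\<Union>C)"
      using CA unfolding A_def by (intro dominated_graph_chain_Union[OF False _ tot]) auto
    moreover have "(y, norm y) \<in> \<Union>C" using False CA unfolding A_def by blast
    ultimately have "\<Union>C \<in> A" unfolding A_def by blast
    then show ?thesis by blast
  qed
  obtain M where "M \<in> A" and Mmax: "\<forall>G\<in>A. M \<subseteq> G \<longrightarrow> G = M"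
    using subset_Zorn[OF chains] by blast
  then have M: "dominated_graph M" and My: "(y, norm y) \<in> M" unfolding A_def by auto
  have dom: "\<exists>t. (z, t) \<in> M" for z
  proof (rule ccontr)
    assume "\<not> (\<exists>t. (z, t) \<in> M)"
    then obtain M' where "dominated_graph M'" "M \<subseteq> M'" "\<exists>t. (z, t) \<in> M'"
      using dominated_graph_extend[OF M] by blast
    then show False using Mmax My \<open>\<not> (\<exists>t. (z, t) \<in> M)\<close> unfolding A_def by blast
  qed
  have Msub: "subspace M" and Mfun: "\<And>v s t. (v, s) \<in> M \<Longrightarrow> (v, t) \<in> M \<Longrightarrow> s = t"
    and Mb: "\<And>v t. (v, t) \<in> M \<Longrightarrow> t \<le> norm v"
    using M by (auto simp: dominated_graph_def)
  define h where "h v = (THE t. (v, t) \<in> M)" for v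
  have hM: "(v, h v) \<in> M" for v unfolding h_def using dom Mfun by (metis theI)
  have hU: "(v, t) \<in> M \<Longrightarrow> h v = t" for v t using hM Mfun by blast
  have "linear h"
  proof (rule linearI)
    show "h (a + b) = h a + h b" for a b using subspace_add[OF Msub hM[of a] hM[of b]] hU by simp
    show "h (r *\<^sub>R a) = r *\<^sub>R h a" for r a using subspace_scale[OF Msub hM[of a], of r] hU by simp
  qed
  moreover have "\<bar>h v\<bar> \<le> norm v" for v
    using Mb[OF hM[of v]] Mb[OF hM[of "-v"]] linear_neg[OF \<open>linear h\<close>, of v] by simp
  ultimately show ?thesis using hU[OF My] unfolding dual_ball_def by blast
qed

text \<open>Banach--Alaoglu: by Tychonoff, the dual ball is compact in the product topology.\<close>
lemma compact_dual_ball: "compact (dual_ball :: ('b::real_normed_vector \<Rightarrow> real) set)"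
proof -
  define B where "B = PiE UNIV (\<lambda>y::'b. cball (0::real) (norm y))"
  have "compactin (product_topology (\<lambda>_. euclidean) UNIV) B"
    unfolding B_def by (subst compactin_PiE) auto
  then have cB: "compact B" by (simp add: euclidean_product_topology)
  have "{\<phi>::'b \<Rightarrow> real. linear \<phi>} =
      {\<phi>. \<forall>x y. \<phi> (x + y) = \<phi> x + \<phi> y} \<inter> {\<phi>. \<forall>c x. \<phi> (c *\<^sub>R x) = c *\<^sub>R \<phi> x}"
    by (auto simp: linear_iff)
  moreover have "closed {\<phi>::'b \<Rightarrow> real. \<forall>x y. \<phi> (x + y) = \<phi> x + \<phi> y}"
    by (intro closed_Collect_all closed_Collect_eq continuous_intros continuous_on_product_coordinates)
  moreover have "closed {\<phi>::'b \<Rightarrow> real. \<forall>c x. \<phi> (c *\<^sub>R x) = c *\<^sub>R \<phi> x}"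
    by (intro closed_Collect_all closed_Collect_eq continuous_intros continuous_on_product_coordinates)
  ultimately have cl: "closed {\<phi>::'b \<Rightarrow> real. linear \<phi>}" by auto
  have "(dual_ball :: ('b \<Rightarrow> real) set) = B \<inter> {\<phi>. linear \<phi>}"
    unfolding dual_ball_def B_def by (auto simp: PiE_iff)
  then show ?thesis using compact_Int_closed[OF cB cl] by simp
qed

lemma dual_ball_blinfun:
  assumes "\<phi> \<in> dual_ball"
  shows "bounded_linear \<phi>" "blinfun_apply (Blinfun \<phi>) = \<phi>" "norm (Blinfun \<phi>) \<le> 1"
proof -
  have lin: "linear \<phi>" and bound: "\<And>y. \<bar>\<phi> y\<bar> \<le> norm y"
    using assms by (auto simp: dual_ball_def)
  show bl: "bounded_linear \<phi>"
  proof (rule bounded_linear_intro[where K=1])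
    show "\<phi> (x + y) = \<phi> x + \<phi> y" for x y using lin by (simp add: linear_iff)
    show "\<phi> (r *\<^sub>R x) = r *\<^sub>R \<phi> x" for r x using lin by (simp add: linear_iff)
    show "norm (\<phi> x) \<le> norm x * 1" for x using bound[of x] by simp
  qed
  show eq: "blinfun_apply (Blinfun \<phi>) = \<phi>" using bl by (rule bounded_linear_Blinfun_apply)
  show "norm (Blinfun \<phi>) \<le> 1" by (rule norm_blinfun_bound) (auto simp: eq bound)
qed

lemma evaluation_in_dual_ball:
  fixes x :: "'a::real_normed_vector"
  assumes "norm x \<le> 1"
  shows "(\<lambda>g::'a \<Rightarrow>\<^sub>L real. blinfun_apply g x) \<in> dual_ball"
proof -
  have "linear (\<lambda>g::'a \<Rightarrow>\<^sub>L real. blinfun_apply g x)"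
    by (intro linearI) (auto simp: blinfun.add_left blinfun.scaleR_left)
  moreover have "\<bar>blinfun_apply g x\<bar> \<le> norm g" for g :: "'a \<Rightarrow>\<^sub>L real"
    using norm_blinfun[of g x] mult_left_mono[OF assms norm_ge_zero[of g]] by simp
  ultimately show ?thesis unfolding dual_ball_def by blast
qed

lemma dual_ball_cluster_point:
  fixes T :: "'i \<Rightarrow> ('b::real_normed_vector \<Rightarrow> real) set"
  assumes sub: "\<And>i. T i \<subseteq> dual_ball"
    and directed: "\<And>I. finite I \<Longrightarrow> \<exists>j. T j \<noteq> {} \<and> (\<forall>i\<in>I. T j \<subseteq> T i)"
  obtains \<zeta> where "\<zeta> \<in> dual_ball"
    and "\<And>i Y e. finite Y \<Longrightarrow> e > 0 \<Longrightarrow> \<exists>h\<in>T i. \<forall>y\<in>Y. \<bar>h y - \<zeta> y\<bar> < e"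
proof -
  have "dual_ball \<inter> (\<Inter>i. closure (T i)) \<noteq> {}"
  proof (rule compact_imp_fip_image[OF compact_dual_ball])
    fix I :: "'i set" assume "finite I"
    then obtain j h where "h \<in> T j" "\<forall>i\<in>I. T j \<subseteq> T i" using directed by blast
    then have "h \<in> dual_ball \<inter> (\<Inter>i\<in>I. closure (T i))" using sub closure_subset by blast
    then show "dual_ball \<inter> (\<Inter>i\<in>I. closure (T i)) \<noteq> {}" by blast
  qed auto
  then obtain \<zeta> where \<zeta>: "\<zeta> \<in> dual_ball" "\<And>i. \<zeta> \<in> closure (T i)" by blast
  have "\<exists>h\<in>T i. \<forall>y\<in>Y. \<bar>h y - \<zeta> y\<bar> < e" if "finite Y" "e > 0" for i Y e
  proof -
    define U where "U = {f. \<forall>y\<in>Y. f (id y) \<in> ball (\<zeta> y) e}"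
    have "open U" unfolding U_def using that by (intro product_topology_basis') auto
    moreover have "\<zeta> \<in> U" unfolding U_def using that by auto
    ultimately obtain h where "h \<in> T i" "h \<in> U"
      using \<zeta>(2)[of i] open_Int_closure_eq_empty[of U "T i"] by blast
    then have "\<forall>y\<in>Y. dist (h y) (\<zeta> y) < e" unfolding U_def by (simp add: dist_commute)
    then show ?thesis using \<open>h \<in> T i\<close> by (auto simp: dist_real_def)
  qed
  with \<zeta>(1) show ?thesis by (rule that)
qed

text \<open>For a separable space the weak\<open>*\<close> topology on the dual ball is first countable, so a point
  in the weak\<open>*\<close> closure of a subset is the pointwise limit of a sequence from that subset.\<close>
lemma separable_dual_ball_sequence:
  assumes "separable_space TYPE('a::real_normed_vector)"
    and S: "S \<subseteq> dual_ball" and \<zeta>: "\<zeta> \<in> (dual_ball :: ('a \<Rightarrow> real) set)"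
    and approx: "\<And>Y e. finite Y \<Longrightarrow> e > 0 \<Longrightarrow> \<exists>h\<in>S. \<forall>y\<in>Y. \<bar>h y - \<zeta> y\<bar> < e"
  obtains hs where "\<And>n. hs n \<in> S" and "\<And>y. (\<lambda>n. hs n y) \<longlonglongrightarrow> \<zeta> y"
proof -
  obtain D :: "'a set" where D: "countable D" "closure D = UNIV"
    using assms(1) unfolding separable_space_def by blast
  then have "D \<noteq> {}" by auto
  define d where "d = from_nat_into D"
  have dD: "range d = D" unfolding d_def using D(1) \<open>D \<noteq> {}\<close> by simp
  have "\<forall>n. \<exists>h\<in>S. \<forall>y\<in>d ` {..n}. \<bar>h y - \<zeta> y\<bar> < 1 / (real n + 1)"
    by (intro allI approx) auto
  then obtain hs where hS: "\<And>n. hs n \<in> S"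
    and close: "\<And>n k. k \<le> n \<Longrightarrow> \<bar>hs n (d k) - \<zeta> (d k)\<bar> < 1 / (real n + 1)"
    by (metis atMost_iff image_eqI)
  have lin: "linear (hs n)" "linear \<zeta>" and bound: "\<bar>hs n v\<bar> \<le> norm v" "\<bar>\<zeta> w\<bar> \<le> norm w" for n v w
    using hS[of n] S \<zeta> unfolding dual_ball_def by blast+
  have "(\<lambda>n. hs n y - \<zeta> y) \<longlonglongrightarrow> 0" for y
  proof (rule LIMSEQ_I)
    fix r :: real assume "r > 0"
    have "y \<in> closure (range d)" using D(2) dD by simp
    then obtain k where k: "dist (d k) y < r / 4" using \<open>r > 0\<close> closure_approachable[of y "range d"]
      by (metis divide_pos_pos image_iff zero_less_numeral)
    obtain N0 where N0: "inverse (real (Suc N0)) < r / 4" using reals_Archimedean[of "r/4"] \<open>r > 0\<close> by auto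
    show "\<exists>N. \<forall>n\<ge>N. norm (hs n y - \<zeta> y - 0) < r"
    proof (intro exI allI impI)
      fix n assume "max k N0 \<le> n"
      then have "1 / (real n + 1) \<le> inverse (real (Suc N0))" by (simp add: field_simps)
      then have "\<bar>hs n (d k) - \<zeta> (d k)\<bar> < r / 4" using close[of k n] N0 \<open>max k N0 \<le> n\<close> by simp
      moreover have "hs n y - \<zeta> y = hs n (y - d k) + (hs n (d k) - \<zeta> (d k)) + \<zeta> (d k - y)"
        using linear_diff[OF lin(1)] linear_diff[OF lin(2)] by simp
      moreover have "\<bar>hs n (y - d k)\<bar> < r / 4" "\<bar>\<zeta> (d k - y)\<bar> < r / 4"
        using bound(1)[of n "y - d k"] bound(2)[of "d k - y"] k by (simp_all add: dist_norm norm_minus_commute)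
      ultimately show "norm (hs n y - \<zeta> y - 0) < r"
        using abs_triangle_ineq[of "hs n (y - d k) + (hs n (d k) - \<zeta> (d k))" "\<zeta> (d k - y)"]
          abs_triangle_ineq[of "hs n (y - d k)" "hs n (d k) - \<zeta> (d k)"] \<open>r > 0\<close> by simp
    qed
  qed
  then show ?thesis using hS by (intro that) (auto simp: LIM_zero_iff)
qed

text \<open>Common kernels of families of continuous functionals.  For finitely many functionals they
  are closed subspaces of finite codimension, the test subspaces for property (au).\<close>
definition joint_kernel :: "('a::real_normed_vector \<Rightarrow>\<^sub>L real) set \<Rightarrow> 'a set" where
  "joint_kernel F = {w. \<forall>f\<in>F. blinfun_apply f w = 0}"

lemma closed_joint_kernel: "closed (joint_kernel F)"
proof -
  have "joint_kernel F = (\<Inter>f\<in>F. {w. blinfun_apply f w = 0})" by (auto simp: joint_kernel_def)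
  moreover have "closed {w. blinfun_apply f w = 0}" for f :: "'a \<Rightarrow>\<^sub>L real"
    by (intro closed_Collect_eq continuous_intros)
  ultimately show ?thesis by auto
qed

lemma subspace_joint_kernel: "subspace (joint_kernel F)"
  unfolding subspace_def joint_kernel_def by (auto simp: blinfun.add_right blinfun.scaleR_right)

lemma joint_kernel_antimono: "F \<subseteq> G \<Longrightarrow> joint_kernel G \<subseteq> joint_kernel F"
  unfolding joint_kernel_def by blast

lemma finite_codim_Int_kernel:
  fixes f :: "'a::real_normed_vector \<Rightarrow>\<^sub>L real"
  assumes W: "subspace W" and "finite_codim W"
  shows "finite_codim (W \<inter> {w. f w = 0})"
proof -
  obtain E where E: "finite E" "span (W \<union> E) = UNIV" using assms(2) unfolding finite_codim_def by blast
  show ?thesis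
  proof (cases "\<exists>e\<in>W. f e \<noteq> 0")
    case False
    then have "W \<inter> {w. f w = 0} = W" by auto
    then show ?thesis using assms(2) by simp
  next
    case True
    then obtain e where e: "e \<in> W" "f e \<noteq> 0" by blast
    define e' where "e' = e /\<^sub>R f e"
    have e'W: "e' \<in> W" and fe': "f e' = 1"
      using e subspace_scale[OF W] unfolding e'_def by (auto simp: blinfun.scaleR_right)
    have "W \<union> E \<subseteq> span ((W \<inter> {w. f w = 0}) \<union> insert e' E)"
    proof
      fix x assume x: "x \<in> W \<union> E"
      show "x \<in> span ((W \<inter> {w. f w = 0}) \<union> insert e' E)"
      proof (cases "x \<in> E")
        case True then show ?thesis by (simp add: span_base)
      next
        case False
        then have "x - f x *\<^sub>R e' \<in> W"
          using x e'W subspace_diff[OF W] subspace_scale[OF W] by auto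
        moreover have "f (x - f x *\<^sub>R e') = 0"
          using fe' by (simp add: blinfun.diff_right blinfun.scaleR_right)
        ultimately have "x - f x *\<^sub>R e' \<in> span ((W \<inter> {w. f w = 0}) \<union> insert e' E)"
          by (simp add: span_base)
        moreover have "f x *\<^sub>R e' \<in> span ((W \<inter> {w. f w = 0}) \<union> insert e' E)"
          by (intro span_scale span_base) simp
        ultimately show ?thesis using span_add by fastforce
      qed
    qed
    then have "span (W \<union> E) \<subseteq> span ((W \<inter> {w. f w = 0}) \<union> insert e' E)"
      by (intro span_minimal) auto
    then show ?thesis using E unfolding finite_codim_def by (intro exI[of _ "insert e' E"]) auto
  qed
qed

lemma finite_codim_joint_kernel:
  assumes "finite F"
  shows "finite_codim (joint_kernel F)"
  using assms
proof (induction F rule: finite_induct)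
  case empty
  show ?case unfolding finite_codim_def joint_kernel_def by (intro exI[of _ "{}"]) simp
next
  case (insert f F)
  have "joint_kernel (insert f F) = joint_kernel F \<inter> {w. f w = 0}" unfolding joint_kernel_def by auto
  then show ?case using finite_codim_Int_kernel[OF subspace_joint_kernel insert.IH] by simp
qed

lemma subspace_far_from_line:
  fixes V :: "'a::real_normed_vector set"
  assumes "closed V" "subspace V" "a \<notin> V"
  obtains d where "d > 0" "\<And>v k. v \<in> V \<Longrightarrow> \<bar>k\<bar> * d \<le> norm (v + k *\<^sub>R a)"
proof -
  define d where "d = infdist a V"
  have "V \<noteq> {}" using subspace_0[OF assms(2)] by blast
  then have "d > 0" unfolding d_def using infdist_pos_not_in_closed assms by blast
  moreover have "\<bar>k\<bar> * d \<le> norm (v + k *\<^sub>R a)" if "v \<in> V" for v k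
  proof (cases "k = 0")
    case False
    have "- (v /\<^sub>R k) \<in> V" using that assms(2) by (simp add: subspace_neg subspace_scale)
    then have "d \<le> norm (v /\<^sub>R k + a)"
      unfolding d_def using infdist_le[of "- (v /\<^sub>R k)" V a] by (simp add: dist_norm add.commute)
    then have "\<bar>k\<bar> * d \<le> norm (k *\<^sub>R (v /\<^sub>R k + a))" by (simp add: mult_left_mono)
    also have "k *\<^sub>R (v /\<^sub>R k + a) = v + k *\<^sub>R a" using False by (simp add: scaleR_add_right)
    finally show ?thesis .
  qed simp
  ultimately show ?thesis using that by blast
qed

lemma line_coefficient_lipschitz:
  assumes "subspace V" "d > 0" and d: "\<And>v k. v \<in> V \<Longrightarrow> \<bar>k\<bar> * d \<le> norm (v + k *\<^sub>R a)"
    and "x - k *\<^sub>R a \<in> V" "x' - k' *\<^sub>R a \<in> V"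
  shows "\<bar>k - k'\<bar> * d \<le> norm (x - x')"
proof -
  have "(x - k *\<^sub>R a) - (x' - k' *\<^sub>R a) \<in> V" using assms(1,4,5) by (rule subspace_diff)
  from d[OF this, of "k - k'"] show ?thesis by (simp add: algebra_simps)
qed

lemma span_insert_subspace:
  assumes "subspace V"
  shows "span (insert a V) = {x. \<exists>k. x - k *\<^sub>R a \<in> V}"
proof -
  have "span V = V" using assms by simp
  then show ?thesis by (subst span_insert) (simp only:)
qed

lemma closed_span_insert:
  fixes V :: "'a::banach set"
  assumes "closed V" "subspace V"
  shows "closed (span (insert a V))"
proof (cases "a \<in> V")
  case True
  then have "insert a V = V" by auto
  moreover have "span V = V" using assms by simp
  ultimately show ?thesis using assms by (simp only:)
next
  case False
  obtain d where d: "d > 0" "\<And>v k. v \<in> V \<Longrightarrow> \<bar>k\<bar> * d \<le> norm (v + k *\<^sub>R a)"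
    using subspace_far_from_line[OF assms False] by blast
  show ?thesis unfolding span_insert_subspace[OF assms(2)] closed_sequential_limits
  proof (intro allI impI, elim conjE)
    fix x l assume "\<forall>n. x n \<in> {x. \<exists>k. x - k *\<^sub>R a \<in> V}" and lim: "x \<longlonglongrightarrow> l"
    then have "\<forall>n. \<exists>k. x n - k *\<^sub>R a \<in> V" by simp
    then obtain k where k: "\<And>n. x n - k n *\<^sub>R a \<in> V"
      using choice[of "\<lambda>n k. x n - k *\<^sub>R a \<in> V"] by blast
    have "Cauchy k"
    proof (rule metric_CauchyI)
      fix e :: real assume "e > 0"
      then obtain M where M: "\<And>m n. m \<ge> M \<Longrightarrow> n \<ge> M \<Longrightarrow> dist (x m) (x n) < e * d"
        using metric_CauchyD[OF LIMSEQ_imp_Cauchy[OF lim], of "e * d"] d(1) by auto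
      have "dist (k m) (k n) < e" if "m \<ge> M" "n \<ge> M" for m n
      proof -
        have "\<bar>k m - k n\<bar> * d < e * d"
          using line_coefficient_lipschitz[OF assms(2) d k[of m] k[of n]] M[OF that]
          by (simp add: dist_norm)
        then show ?thesis using d(1) by (simp add: dist_real_def)
      qed
      then show "\<exists>M. \<forall>m\<ge>M. \<forall>n\<ge>M. dist (k m) (k n) < e" by blast
    qed
    then obtain c where "k \<longlonglongrightarrow> c" using Cauchy_convergent_iff convergent_def by blast
    then have "(\<lambda>n. x n - k n *\<^sub>R a) \<longlonglongrightarrow> l - c *\<^sub>R a" by (intro tendsto_intros lim)
    then have "l - c *\<^sub>R a \<in> V" by (rule closed_sequentially[OF assms(1) k])
    then show "l \<in> {x. \<exists>k. x - k *\<^sub>R a \<in> V}" by blast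
  qed
qed

definition finite_rank_map :: "(('a::real_normed_vector \<Rightarrow>\<^sub>L real) \<times> 'a) list \<Rightarrow> 'a \<Rightarrow> 'a" where
  "finite_rank_map L y = (\<Sum>p\<leftarrow>L. blinfun_apply (fst p) y *\<^sub>R snd p)"

lemma bounded_linear_finite_rank_map: "bounded_linear (finite_rank_map L)"
proof (induction L)
  case Nil then show ?case by (simp add: finite_rank_map_def)
next
  case (Cons p L)
  have "finite_rank_map (p # L) = (\<lambda>y. blinfun_apply (fst p) y *\<^sub>R snd p + finite_rank_map L y)"
    by (auto simp: finite_rank_map_def)
  moreover have "bounded_linear (\<lambda>y. blinfun_apply (fst p) y *\<^sub>R snd p)"
    by (rule bounded_linear_compose[OF bounded_linear_scaleR_left blinfun.bounded_linear_right])
  ultimately show ?case using Cons by (simp add: bounded_linear_add)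
qed

lemma finite_rank_map_snoc:
  "finite_rank_map (L @ [(c, e)]) y = finite_rank_map L y + blinfun_apply c y *\<^sub>R e"
  by (simp add: finite_rank_map_def)

lemma norm_finite_rank_map_le:
  assumes "\<And>p. p \<in> set L \<Longrightarrow> \<bar>blinfun_apply (fst p) w\<bar> \<le> \<eta>"
  shows "norm (finite_rank_map L w) \<le> \<eta> * (\<Sum>p\<leftarrow>L. norm (snd p))"
  using assms
proof (induction L)
  case Nil then show ?case by (simp add: finite_rank_map_def)
next
  case (Cons p L)
  have "norm (finite_rank_map (p # L) w)
      \<le> norm (blinfun_apply (fst p) w *\<^sub>R snd p) + norm (finite_rank_map L w)"
    unfolding finite_rank_map_def by (simp only: list.map sum_list.Cons) (rule norm_triangle_ineq)
  also have "norm (blinfun_apply (fst p) w *\<^sub>R snd p) \<le> \<eta> * norm (snd p)"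
    using Cons.prems[of p] by (simp add: mult_right_mono)
  also have "norm (finite_rank_map L w) \<le> \<eta> * (\<Sum>p\<leftarrow>L. norm (snd p))"
    using Cons by simp
  finally show ?case by (simp add: algebra_simps)
qed

lemma coordinate_functional:
  fixes V :: "'a::real_normed_vector set"
  assumes "closed V" "subspace V" "a \<notin> V" and P: "bounded_linear P"
    and coeff: "\<And>y. \<exists>k. P y - k *\<^sub>R a \<in> V"
  obtains c :: "'a \<Rightarrow>\<^sub>L real" where "\<And>y. P y - blinfun_apply c y *\<^sub>R a \<in> V"
proof -
  obtain d where d: "d > 0" "\<And>v k. v \<in> V \<Longrightarrow> \<bar>k\<bar> * d \<le> norm (v + k *\<^sub>R a)"
    using subspace_far_from_line[OF assms(1-3)] by blast
  have unique: "k = k'" if "P y - k *\<^sub>R a \<in> V" "P y - k' *\<^sub>R a \<in> V" for y k k'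
    using line_coefficient_lipschitz[OF assms(2) d that] d(1) by (simp add: mult_le_0_iff)
  define T where "T y = (THE k. P y - k *\<^sub>R a \<in> V)" for y
  have T: "P y - T y *\<^sub>R a \<in> V" for y
    unfolding T_def using coeff[of y] unique[of y] by (metis theI)
  have T_eq: "T y = k" if "P y - k *\<^sub>R a \<in> V" for y k using unique[OF T that] .
  obtain K where K: "\<And>y. norm (P y) \<le> norm y * K" using bounded_linear.bounded[OF P] by blast
  have "bounded_linear T"
  proof (rule bounded_linear_intro[where K="K / d"])
    fix x y
    have "P (x + y) - (T x + T y) *\<^sub>R a = (P x - T x *\<^sub>R a) + (P y - T y *\<^sub>R a)"
      by (simp add: linear_add[OF bounded_linear.linear[OF P]] algebra_simps)
    also have "\<dots> \<in> V" using T assms(2) by (simp add: subspace_add)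
    finally show "T (x + y) = T x + T y" by (rule T_eq)
  next
    fix r x
    have "P (r *\<^sub>R x) - (r *\<^sub>R T x) *\<^sub>R a = r *\<^sub>R (P x - T x *\<^sub>R a)"
      by (simp add: linear_scale[OF bounded_linear.linear[OF P]] algebra_simps)
    also have "\<dots> \<in> V" using T assms(2) by (simp add: subspace_scale)
    finally show "T (r *\<^sub>R x) = r *\<^sub>R T x" by (rule T_eq)
  next
    fix x
    have "\<bar>T x\<bar> * d \<le> norm (P x)" using d(2)[OF T[of x], of "T x"] by simp
    also have "\<dots> \<le> norm x * K" by (rule K)
    finally show "norm (T x) \<le> norm x * (K / d)" using d(1) by (simp add: pos_le_divide_eq)
  qed
  then have eq: "blinfun_apply (Blinfun T) = T" by (rule bounded_linear_Blinfun_apply)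
  show ?thesis
  proof (rule that)
    show "P y - blinfun_apply (Blinfun T) y *\<^sub>R a \<in> V" for y unfolding eq by (rule T)
  qed
qed

lemma finite_codim_complement:
  fixes V :: "'a::banach set"
  assumes "finite F" "closed V" "subspace V" "span (V \<union> F) = UNIV"
  shows "\<exists>L. \<forall>y. y - finite_rank_map L y \<in> V"
  using assms
proof (induction F arbitrary: V rule: finite_induct)
  case empty
  have "span V = V" using empty.prems(2) by simp
  then have "V = UNIV" using empty.prems(3) by (simp only: Un_empty_right)
  then show ?case by simp
next
  case (insert a F)
  define V' where "V' = span (insert a V)"
  have V'_eq: "V' = {x. \<exists>k. x - k *\<^sub>R a \<in> V}"
    unfolding V'_def by (rule span_insert_subspace[OF insert.prems(2)])
  have "V \<subseteq> V'" "a \<in> V'" unfolding V'_def by (auto intro: span_base)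
  then have "V \<union> insert a F \<subseteq> span (V' \<union> F)" using span_superset[of "V' \<union> F"] by auto
  then have "span (V \<union> insert a F) \<subseteq> span (V' \<union> F)" by (intro span_minimal) auto
  then have "span (V' \<union> F) = UNIV" using insert.prems(3) by auto
  moreover have "closed V'" unfolding V'_def by (rule closed_span_insert[OF insert.prems(1,2)])
  moreover have "subspace V'" unfolding V'_def by (rule subspace_span)
  ultimately obtain L where L: "\<And>y. y - finite_rank_map L y \<in> V'"
    using insert.IH by blast
  show ?case
  proof (cases "a \<in> V")
    case True
    then have "insert a V = V" by auto
    moreover have "span V = V" using insert.prems(2) by simp
    ultimately have "V' = V" unfolding V'_def by (simp only:)
    then show ?thesis using L by blast
  next
    case False
    have "bounded_linear (\<lambda>y. y - finite_rank_map L y)"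
      by (intro bounded_linear_sub bounded_linear_ident bounded_linear_finite_rank_map)
    moreover have "\<exists>k. y - finite_rank_map L y - k *\<^sub>R a \<in> V" for y
      using L[of y] unfolding V'_eq by blast
    ultimately obtain c where "\<And>y. y - finite_rank_map L y - blinfun_apply c y *\<^sub>R a \<in> V"
      using coordinate_functional[OF insert.prems(1,2) False] by blast
    then have "y - finite_rank_map (L @ [(c, a)]) y \<in> V" for y
      by (simp add: finite_rank_map_snoc algebra_simps)
    then show ?thesis by blast
  qed
qed

lemma norm_bound_from_ball:
  fixes f :: "'a::real_normed_vector \<Rightarrow>\<^sub>L real"
  assumes "r > 0" and bound: "\<And>y. y \<in> ball a r \<Longrightarrow> \<bar>blinfun_apply f y\<bar> \<le> k"
  shows "norm f \<le> 4 * k / r"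
proof (rule norm_blinfun_bound)
  have "\<bar>blinfun_apply f a\<bar> \<le> k" using bound \<open>r > 0\<close> by simp
  then show "0 \<le> 4 * k / r" using \<open>r > 0\<close> by simp
next
  fix x
  show "norm (blinfun_apply f x) \<le> 4 * k / r * norm x"
  proof (cases "x = 0")
    case False
    define c where "c = r / 2 / norm x"
    have c: "c > 0" using False \<open>r > 0\<close> unfolding c_def by simp
    have "norm (c *\<^sub>R x) = r / 2" using False \<open>r > 0\<close> unfolding c_def by simp
    then have "\<bar>blinfun_apply f (a + c *\<^sub>R x)\<bar> \<le> k" "\<bar>blinfun_apply f a\<bar> \<le> k"
      using bound \<open>r > 0\<close> by (auto simp: dist_norm)
    moreover have "blinfun_apply f (a + c *\<^sub>R x) = blinfun_apply f a + c * blinfun_apply f x"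
      by (simp add: blinfun.add_right blinfun.scaleR_right)
    ultimately have "c * \<bar>blinfun_apply f x\<bar> \<le> 2 * k" using c by (simp add: abs_mult)
    then have "\<bar>blinfun_apply f x\<bar> \<le> 2 * k / c" using c by (simp add: pos_le_divide_eq mult.commute)
    also have "2 * k / c = 4 * k / r * norm x" using False \<open>r > 0\<close> unfolding c_def by (simp add: field_simps)
    finally show ?thesis by simp
  qed simp
qed

text \<open>Uniform boundedness principle (via Baire), needed to bound weak\<open>*\<close>-null sequences.\<close>
lemma uniform_boundedness:
  fixes f :: "nat \<Rightarrow> ('a::banach \<Rightarrow>\<^sub>L real)"
  assumes pointwise: "\<And>x. \<exists>K. \<forall>n. \<bar>blinfun_apply (f n) x\<bar> \<le> K"
  shows "\<exists>B. \<forall>n. norm (f n) \<le> B"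
proof -
  define T where "T k = {y. \<forall>n. \<bar>blinfun_apply (f n) y\<bar> \<le> real k}" for k :: nat
  have closed: "closed (T k)" for k
  proof -
    have "T k = (\<Inter>n. {y. \<bar>blinfun_apply (f n) y\<bar> \<le> real k})" unfolding T_def by auto
    moreover have "closed {y. \<bar>blinfun_apply (f n) y\<bar> \<le> real k}" for n
      by (intro closed_Collect_le continuous_intros)
    ultimately show ?thesis by auto
  qed
  have cover: "(\<Union>k. T k) = UNIV"
  proof -
    have "y \<in> (\<Union>k. T k)" for y
    proof -
      obtain K where "\<And>n. \<bar>blinfun_apply (f n) y\<bar> \<le> K" using pointwise by blast
      moreover obtain k :: nat where "K \<le> real k" using real_arch_simple by blast
      ultimately have "y \<in> T k" unfolding T_def by (auto intro: order_trans)
      then show ?thesis by blast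
    qed
    then show ?thesis by blast
  qed
  have "\<exists>k. interior (T k) \<noteq> {}"
  proof (rule ccontr)
    assume "\<not> (\<exists>k. interior (T k) \<noteq> {})"
    then have "euclidean interior_of (\<Union>(range T)) = {}"
      by (intro Baire_category_alt) (auto simp: completely_metrizable_space_euclidean closed)
    then show False using cover by simp
  qed
  then obtain k a r where "r > 0" "ball a r \<subseteq> T k" by (meson equals0I mem_interior)
  then have "norm (f n) \<le> 4 * real k / r" for n
    by (intro norm_bound_from_ball) (auto simp: T_def)
  then show ?thesis by blast
qed

lemma weak_star_null_bounded:
  fixes f :: "nat \<Rightarrow> ('a::banach \<Rightarrow>\<^sub>L real)"
  assumes "weak_star_null f"
  obtains B where "B > 0" "\<And>n. norm (f n) \<le> B"
proof -
  have "\<exists>K. \<forall>n. \<bar>blinfun_apply (f n) y\<bar> \<le> K" for y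
  proof -
    have "Bseq (\<lambda>n. blinfun_apply (f n) y)"
      using assms unfolding weak_star_null_def by (intro convergent_imp_Bseq convergentI) blast
    then show ?thesis by (auto simp: Bseq_def)
  qed
  then obtain B where B: "\<And>n. norm (f n) \<le> B" using uniform_boundedness by blast
  have "B + 1 > 0" using B[of 0] norm_ge_zero[of "f 0"] by linarith
  moreover have "norm (f n) \<le> B + 1" for n using B[of n] by linarith
  ultimately show ?thesis by (rule that)
qed

lemma nearly_norming_vector:
  fixes g :: "'a::real_normed_vector \<Rightarrow>\<^sub>L real"
  assumes "e > 0"
  shows "\<exists>x. norm x \<le> 1 \<and> norm g - e \<le> blinfun_apply g x"
proof (rule ccontr)
  assume "\<not> ?thesis"
  then have small: "\<And>x. norm x \<le> 1 \<Longrightarrow> blinfun_apply g x < norm g - e" by (meson not_le)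
  have "norm (blinfun_apply g x) \<le> (norm g - e) * norm x" for x
  proof (cases "x = 0")
    case False
    define u where "u = x /\<^sub>R norm x"
    have "norm u \<le> 1" "norm (- u) \<le> 1" using False by (auto simp: u_def)
    then have "\<bar>blinfun_apply g u\<bar> \<le> norm g - e"
      using small[of u] small[of "- u"] by (auto simp: blinfun.minus_right)
    moreover have "blinfun_apply g x = norm x * blinfun_apply g u"
      using False by (simp add: u_def blinfun.scaleR_right)
    ultimately show ?thesis by (simp add: abs_mult mult.commute mult_left_mono)
  qed simp
  moreover have "0 < norm g - e" using small[of 0] by simp
  ultimately have "norm g \<le> norm g - e" by (intro norm_blinfun_bound) auto
  then show False using assms by simp
qed

text \<open>Norming functionals \<open>h\<close> of \<open>x - w\<close> for such \<open>w\<close> have a weak\<open>*\<close>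
  cluster point \<open>\<zeta>\<close>, and by separability a sequence \<open>h_n \<rightarrow> \<zeta>\<close> weak\<open>*\<close> of them with \<open>\<zeta>(w_n) = 0\<close>.\<close>
lemma norming_sequence_in_kernels:
  fixes x :: "'a::real_normed_vector"
  assumes sep: "separable_space TYPE('a)"
    and avoid: "\<And>F. finite F \<Longrightarrow> \<exists>w\<in>joint_kernel F. P w"
  obtains \<zeta> hs ws where "\<zeta> \<in> dual_ball" "\<And>n. hs n \<in> dual_ball" "\<And>y. (\<lambda>n. hs n y) \<longlonglongrightarrow> \<zeta> y"
    "\<And>n. \<zeta> (ws n) = 0" "\<And>n. P (ws n)" "\<And>n. hs n (x - ws n) = norm (x - ws n)"
proof -
  define T where "T fs = {h \<in> dual_ball. \<exists>w\<in>joint_kernel (set fs). P w \<and> h (x - w) = norm (x - w)}"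
    for fs :: "('a \<Rightarrow>\<^sub>L real) list"
  have T_sub: "T fs \<subseteq> dual_ball" for fs unfolding T_def by blast
  have "\<exists>j. T j \<noteq> {} \<and> (\<forall>i\<in>I. T j \<subseteq> T i)" if "finite I" for I
  proof -
    obtain ls where ls: "set ls = I" using finite_list[OF \<open>finite I\<close>] by blast
    obtain w where w: "w \<in> joint_kernel (set (concat ls))" "P w" using avoid by blast
    obtain h where "h \<in> dual_ball" "h (x - w) = norm (x - w)" using norming_functional by blast
    then have "T (concat ls) \<noteq> {}" using w unfolding T_def by blast
    moreover have "joint_kernel (set (concat ls)) \<subseteq> joint_kernel (set i)" if "i \<in> I" for i
      using ls that by (intro joint_kernel_antimono) auto
    then have "\<forall>i\<in>I. T (concat ls) \<subseteq> T i" unfolding T_def by blast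
    ultimately show ?thesis by blast
  qed
  then obtain \<zeta> where \<zeta>: "\<zeta> \<in> dual_ball"
    and approx: "\<And>i Y e. finite Y \<Longrightarrow> e > 0 \<Longrightarrow> \<exists>h\<in>T i. \<forall>y\<in>Y. \<bar>h y - \<zeta> y\<bar> < e"
    using dual_ball_cluster_point[of T, OF T_sub] by blast
  obtain hs where hs: "\<And>n. hs n \<in> T [Blinfun \<zeta>]" and lim: "\<And>y. (\<lambda>n. hs n y) \<longlonglongrightarrow> \<zeta> y"
    using separable_dual_ball_sequence[OF sep T_sub \<zeta> approx] by blast
  have "\<forall>n. \<exists>w. \<zeta> w = 0 \<and> P w \<and> hs n (x - w) = norm (x - w)"
    using hs dual_ball_blinfun(2)[OF \<zeta>] unfolding T_def joint_kernel_def by fastforce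
  then obtain ws where "\<And>n. \<zeta> (ws n) = 0 \<and> P (ws n) \<and> hs n (x - ws n) = norm (x - ws n)"
    by metis
  moreover have "hs n \<in> dual_ball" for n using hs T_sub by blast
  ultimately show ?thesis using that \<zeta> lim by blast
qed

lemma bad_vector_bound:
  fixes a b t \<delta> :: real
  assumes "\<delta> > 0" "0 \<le> b" "(1 + \<delta>) * b < a" "a - t \<le> (1 + \<delta> / 2) * b"
  shows "\<delta> * a < 2 * (1 + \<delta>) * t"
proof -
  have "(1 + \<delta>) * (a - t) \<le> (1 + \<delta> / 2) * ((1 + \<delta>) * b)"
    using assms(1,4) mult_left_mono[OF assms(4), of "1 + \<delta>"] by (simp add: algebra_simps)
  also have "\<dots> < (1 + \<delta> / 2) * a" using assms(1,3) by simp
  finally show ?thesis by (simp add: algebra_simps)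
qed

lemma bad_vector_test:
  fixes q :: "'a::real_normed_vector \<Rightarrow>\<^sub>L real"
  assumes "\<delta> > 0" and bad: "(1 + \<delta>) * norm (x + w) < norm (x - w)"
    and q: "norm q \<le> 1 + \<delta> / 2" and test: "norm (x - w) - t \<le> blinfun_apply q (x + w)"
  shows "\<delta> * norm x < 2 * (1 + \<delta>) * t"
proof -
  have "blinfun_apply q (x + w) \<le> norm q * norm (x + w)" using norm_blinfun[of q "x + w"] by simp
  also have "\<dots> \<le> (1 + \<delta> / 2) * norm (x + w)" using q by (intro mult_right_mono) auto
  finally have "norm (x - w) - t \<le> (1 + \<delta> / 2) * norm (x + w)" using test by linarith
  then have "\<delta> * norm (x - w) < 2 * (1 + \<delta>) * t" by (rule bad_vector_bound[OF \<open>\<delta> > 0\<close> norm_ge_zero bad])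
  moreover have "norm x < norm (x - w)"
  proof -
    have "norm (2 *\<^sub>R x) \<le> norm (x - w) + norm (x + w)"
      using norm_triangle_ineq[of "x - w" "x + w"] by (simp add: scaleR_2)
    moreover have "norm (x + w) < norm (x - w)"
      using bad \<open>\<delta> > 0\<close> mult_le_cancel_right1[of "norm (x + w)" "1 + \<delta>"] by auto
    ultimately show ?thesis by simp
  qed
  then have "\<delta> * norm x < \<delta> * norm (x - w)" using \<open>\<delta> > 0\<close> by simp
  ultimately show ?thesis by linarith
qed

text \<open>What (au*) is used for in part (a): if \<open>h_n \<rightarrow> z\<close> weak* within the dual ball, the
  reflected functionals \<open>2 z - h_n = z - (h_n - z)\<close> eventually have norm close to at most 1, since
  \<open>\<parallel>z + (h_n - z)\<parallel> = \<parallel>h_n\<parallel> \<le> 1\<close> and \<open>h_n - z\<close> is weak*-null.\<close>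
lemma au_star_reflected_approximants:
  assumes au_star: "property_au_star TYPE('a::real_normed_vector)"
    and \<zeta>: "\<zeta> \<in> dual_ball" and hs: "\<And>n. hs n \<in> (dual_ball :: ('a \<Rightarrow> real) set)"
    and lim: "\<And>y. (\<lambda>n. hs n y) \<longlonglongrightarrow> \<zeta> y" and "r > 0"
  shows "eventually (\<lambda>n. norm (2 *\<^sub>R Blinfun \<zeta> - Blinfun (hs n)) < 1 + r) sequentially"
proof -
  define z where "z = Blinfun \<zeta>"
  define g where "g n = Blinfun (hs n) - z" for n
  have z: "blinfun_apply z = \<zeta>" unfolding z_def by (rule dual_ball_blinfun(2)[OF \<zeta>])
  have H: "blinfun_apply (Blinfun (hs n)) = hs n" "norm (Blinfun (hs n)) \<le> 1" for n
    using dual_ball_blinfun[OF hs[of n]] by auto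
  have "weak_star_null g"
    unfolding weak_star_null_def g_def using lim by (simp add: blinfun.diff_left H z LIM_zero)
  then have "(\<lambda>n. norm (z + g n) - norm (z - g n)) \<longlonglongrightarrow> 0"
    using au_star unfolding property_au_star_def by blast
  then have "eventually (\<lambda>n. \<bar>norm (z + g n) - norm (z - g n)\<bar> < r) sequentially"
    using \<open>r > 0\<close> by (auto dest!: tendstoD[of _ _ _ r] simp: dist_real_def)
  then show ?thesis
  proof (rule eventually_mono)
    fix n assume close: "\<bar>norm (z + g n) - norm (z - g n)\<bar> < r"
    have "norm (z + g n) \<le> 1" using H(2)[of n] unfolding g_def by simp
    moreover have "z - g n = 2 *\<^sub>R Blinfun \<zeta> - Blinfun (hs n)" unfolding g_def z_def by (simp add: scaleR_2)
    ultimately show "norm (2 *\<^sub>R Blinfun \<zeta> - Blinfun (hs n)) < 1 + r"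
      using close unfolding abs_less_iff by simp
  qed
qed

lemma au_star_imp_au:
  assumes sep: "separable_space TYPE('a::banach)" and au_star: "property_au_star TYPE('a)"
  shows "property_au TYPE('a)"
  unfolding property_au_def
proof (intro allI impI)
  fix x :: 'a and \<delta> :: real assume "\<delta> > 0"
  show "\<exists>W. subspace W \<and> closed W \<and> finite_codim W \<and> (\<forall>w\<in>W. norm (x - w) \<le> (1 + \<delta>) * norm (x + w))"
  proof (rule ccontr)
    define bad where "bad w \<longleftrightarrow> (1 + \<delta>) * norm (x + w) < norm (x - w)" for w
    assume "\<not> ?thesis"
    then have "\<exists>w\<in>joint_kernel F. bad w" if "finite F" for F
      using closed_joint_kernel subspace_joint_kernel finite_codim_joint_kernel[OF that]
      unfolding bad_def by (meson not_le)
    then obtain \<zeta> hs ws where \<zeta>: "\<zeta> \<in> dual_ball" and hs: "\<And>n. hs n \<in> dual_ball"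
      and lim: "\<And>y. (\<lambda>n. hs n y) \<longlonglongrightarrow> \<zeta> y" and ker: "\<And>n. \<zeta> (ws n) = 0"
      and ws_bad: "\<And>n. bad (ws n)" and norming: "\<And>n. hs n (x - ws n) = norm (x - ws n)"
      using norming_sequence_in_kernels[OF sep] by metis
    have "eventually (\<lambda>n. norm (2 *\<^sub>R Blinfun \<zeta> - Blinfun (hs n)) < 1 + \<delta> / 2) sequentially"
      using \<open>\<delta> > 0\<close> by (intro au_star_reflected_approximants[OF au_star \<zeta> hs lim]) simp
    moreover have "x \<noteq> 0"
    proof
      assume "x = 0"
      have "norm (ws 0) \<le> (1 + \<delta>) * norm (ws 0)" using \<open>\<delta> > 0\<close> by (simp add: mult_le_cancel_right1)
      then show False using ws_bad[of 0] \<open>x = 0\<close> unfolding bad_def by simp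
    qed
    define \<theta> where "\<theta> = norm x * \<delta> / (4 * (1 + \<delta>))"
    have "\<theta> > 0" using \<open>x \<noteq> 0\<close> \<open>\<delta> > 0\<close> unfolding \<theta>_def by simp
    then have "eventually (\<lambda>n. \<bar>hs n x - \<zeta> x\<bar> < \<theta>) sequentially"
      using lim[of x] by (auto dest!: tendstoD[of _ _ _ \<theta>] simp: dist_real_def)
    ultimately obtain n where q: "norm (2 *\<^sub>R Blinfun \<zeta> - Blinfun (hs n)) < 1 + \<delta> / 2"
      and close_x: "\<bar>hs n x - \<zeta> x\<bar> < \<theta>"
      using eventually_happens'[OF sequentially_bot eventually_conj] by blast
    (* Testing 2 zeta - h_n on x + w_n contradicts badness of w_n. *)
    have "blinfun_apply (2 *\<^sub>R Blinfun \<zeta> - Blinfun (hs n)) (x + ws n)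
        = 2 * (\<zeta> x - hs n x) + norm (x - ws n)"
    proof -
      have "linear (hs n)" "linear \<zeta>" using hs[of n] \<zeta> unfolding dual_ball_def by blast+
      then show ?thesis using ker[of n] norming[of n] linear_diff[of "hs n"] linear_add[of \<zeta>] linear_add[of "hs n"]
        by (simp add: blinfun.diff_left blinfun.scaleR_left dual_ball_blinfun(2)[OF \<zeta>]
            dual_ball_blinfun(2)[OF hs[of n]])
    qed
    then have "norm (x - ws n) - 2 * \<theta> \<le> blinfun_apply (2 *\<^sub>R Blinfun \<zeta> - Blinfun (hs n)) (x + ws n)"
      using close_x by (simp add: abs_less_iff)
    with q have "\<delta> * norm x < 2 * (1 + \<delta>) * (2 * \<theta>)"
      by (intro bad_vector_test[OF \<open>\<delta> > 0\<close> ws_bad[of n, unfolded bad_def]]) simp_all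
    moreover have "2 * (1 + \<delta>) * (2 * \<theta>) = \<delta> * norm x"
      using \<open>\<delta> > 0\<close> unfolding \<theta>_def by (simp add: field_simps)
    ultimately show False by simp
  qed
qed

lemma reflexive_weak_cluster_point:
  fixes u :: "nat \<Rightarrow> 'a::real_normed_vector"
  assumes refl: "reflexive_space TYPE('a)" and bounded: "\<And>n. norm (u n) \<le> 1"
    and frequent: "\<And>N. \<exists>n\<ge>N. n \<in> I"
  obtains x where "\<And>N G (\<eta>::real). finite G \<Longrightarrow> \<eta> > 0 \<Longrightarrow>
    \<exists>n\<ge>N. n \<in> I \<and> (\<forall>g\<in>G. \<bar>blinfun_apply g (u n) - blinfun_apply g x\<bar> < \<eta>)"
proof -
  define T where "T N = {(\<lambda>g::'a \<Rightarrow>\<^sub>L real. blinfun_apply g (u n)) | n. n \<ge> N \<and> n \<in> I}" for N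
  have T_sub: "T N \<subseteq> dual_ball" for N unfolding T_def using evaluation_in_dual_ball bounded by blast
  have "\<exists>j. T j \<noteq> {} \<and> (\<forall>i\<in>J. T j \<subseteq> T i)" if "finite J" for J
  proof -
    have "\<forall>i\<in>J. T (Max (insert 0 J)) \<subseteq> T i" unfolding T_def using \<open>finite J\<close> by fastforce
    moreover obtain n where "n \<ge> Max (insert 0 J)" "n \<in> I" using frequent by blast
    then have "T (Max (insert 0 J)) \<noteq> {}" unfolding T_def by blast
    ultimately show ?thesis by blast
  qed
  then obtain \<zeta> where \<zeta>: "\<zeta> \<in> dual_ball"
    and approx: "\<And>N G e. finite G \<Longrightarrow> e > 0 \<Longrightarrow> \<exists>h\<in>T N. \<forall>g\<in>G. \<bar>h g - \<zeta> g\<bar> < e"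
    using dual_ball_cluster_point[of T, OF T_sub] by blast
  obtain x where x: "\<And>g. blinfun_apply (Blinfun \<zeta>) g = blinfun_apply g x"
    using refl unfolding reflexive_space_def by blast
  have \<zeta>_eval: "\<zeta> g = blinfun_apply g x" for g
    using x[of g] unfolding dual_ball_blinfun(2)[OF \<zeta>] .
  have close: "\<exists>n\<ge>N. n \<in> I \<and> (\<forall>g\<in>G. \<bar>blinfun_apply g (u n) - blinfun_apply g x\<bar> < \<eta>)"
    if fin: "finite G" and pos: "\<eta> > 0" for N and G :: "('a \<Rightarrow>\<^sub>L real) set" and \<eta> :: real
  proof -
    obtain h where "h \<in> T N" and h: "\<forall>g\<in>G. \<bar>h g - \<zeta> g\<bar> < \<eta>" using approx[OF fin pos] by blast
    then obtain n where "n \<ge> N" "n \<in> I" "h = (\<lambda>g. blinfun_apply g (u n))" unfolding T_def by blast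
    then show ?thesis using h unfolding \<zeta>_eval by auto
  qed
  show ?thesis by (rule that) (rule close)
qed

text \<open>The functionals and the constant come from the complement of the (au) subspace.\<close>
lemma au_weak_perturbation:
  fixes x :: "'a::banach"
  assumes au: "property_au TYPE('a)" and "\<delta> > 0"
  obtains G C where "finite G" "C \<ge> 0"
    "\<And>y \<eta>. (\<And>g. g \<in> G \<Longrightarrow> \<bar>blinfun_apply g (y - x)\<bar> \<le> \<eta>) \<Longrightarrow>
      \<exists>v. norm (x - v) \<le> (1 + \<delta>) * (norm y + \<eta> * C) \<and> norm (y - x - v) \<le> \<eta> * C"
proof -
  obtain W where W: "subspace W" "closed W" "finite_codim W"
    and W_au: "\<And>w. w \<in> W \<Longrightarrow> norm (x - w) \<le> (1 + \<delta>) * norm (x + w)"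
    using au \<open>\<delta> > 0\<close> unfolding property_au_def by blast
  obtain F where "finite F" "span (W \<union> F) = UNIV" using W(3) unfolding finite_codim_def by blast
  then obtain L where L: "\<And>y. y - finite_rank_map L y \<in> W"
    using finite_codim_complement W(1,2) by blast
  define C where "C = (\<Sum>p\<leftarrow>L. norm (snd p))"
  have "C \<ge> 0" unfolding C_def by (intro sum_list_nonneg) auto
  have perturb: "\<exists>v. norm (x - v) \<le> (1 + \<delta>) * (norm y + \<eta> * C) \<and> norm (y - x - v) \<le> \<eta> * C"
    if small: "\<And>g. g \<in> fst ` set L \<Longrightarrow> \<bar>blinfun_apply g (y - x)\<bar> \<le> \<eta>" for y \<eta>
  proof (intro exI conjI)
    define s where "s = finite_rank_map L (y - x)"
    have s: "norm s \<le> \<eta> * C" unfolding s_def C_def using small by (intro norm_finite_rank_map_le) auto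
    then show "norm (y - x - (y - x - s)) \<le> \<eta> * C" by simp
    have "norm (x - (y - x - s)) \<le> (1 + \<delta>) * norm (x + (y - x - s))"
      using W_au L[of "y - x"] unfolding s_def by blast
    also have "norm (x + (y - x - s)) \<le> norm y + \<eta> * C"
      using norm_triangle_ineq4[of y s] s by simp
    finally show "norm (x - (y - x - s)) \<le> (1 + \<delta>) * (norm y + \<eta> * C)"
      using \<open>\<delta> > 0\<close> by (simp add: mult_left_mono)
  qed
  show ?thesis
  proof (rule that[of "fst ` set L" C])
    show "finite (fst ` set L)" by simp
    show "C \<ge> 0" by fact
  qed (rule perturb)
qed

text \<open>The estimate behind part (b): if the unit vector \<open>y\<close> is weakly close to \<open>x\<close> on \<open>x*\<close> and
  \<open>y - x\<close> is norm-close to a vector \<open>v\<close> with \<open>\<parallel>x - v\<parallel> \<le> (1 + \<delta>)\<parallel>x + v\<parallel>\<close> approximately, then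
  \<open>(x* + f)(y)\<close> exceeds \<open>\<parallel>x* - f\<parallel>\<close> only by a small amount, using \<open>y = x + (y - x)\<close> and
  \<open>(x* + f)(y) = 2 f(x) + 2 x*(y - x) - (x* - f)(s) + (x* - f)(x - v)\<close> with \<open>s = y - x - v\<close>.\<close>
lemma functional_at_perturbed_vector:
  fixes xs f :: "'a::real_normed_vector \<Rightarrow>\<^sub>L real"
  assumes "norm y \<le> 1" "\<delta> \<ge> 0" "e \<ge> 0" and B: "norm (xs - f) \<le> B"
    and v: "norm (x - v) \<le> (1 + \<delta>) * (norm y + e)" and s: "norm (y - x - v) \<le> e"
    and fx: "\<bar>blinfun_apply f x\<bar> \<le> \<eta>" and xs: "\<bar>blinfun_apply xs (y - x)\<bar> \<le> \<eta>"
  shows "blinfun_apply (xs + f) y \<le> norm (xs - f) + 4 * \<eta> + B * (\<delta> + e * (2 + \<delta>))"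
proof -
  define M where "M = norm (xs - f)"
  have "blinfun_apply (xs + f) y = 2 * blinfun_apply f x + 2 * blinfun_apply xs (y - x)
      - blinfun_apply (xs - f) (y - x - v) + blinfun_apply (xs - f) (x - v)"
    by (simp add: blinfun.add_left blinfun.diff_left blinfun.add_right blinfun.diff_right algebra_simps)
  moreover have "\<bar>blinfun_apply (xs - f) (y - x - v)\<bar> \<le> B * e"
  proof -
    have "\<bar>blinfun_apply (xs - f) (y - x - v)\<bar> \<le> norm (xs - f) * norm (y - x - v)"
      using norm_blinfun[of "xs - f" "y - x - v"] by simp
    also have "\<dots> \<le> B * e" using B s order_trans[OF norm_ge_zero B] by (intro mult_mono) auto
    finally show ?thesis .
  qed
  moreover have "blinfun_apply (xs - f) (x - v) \<le> M + B * (\<delta> + e * (1 + \<delta>))"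
  proof -
    have "blinfun_apply (xs - f) (x - v) \<le> M * norm (x - v)"
      unfolding M_def using norm_blinfun[of "xs - f" "x - v"] by simp
    also have "\<dots> \<le> M * ((1 + \<delta>) * (1 + e))"
      using v assms(1,2) unfolding M_def by (intro mult_left_mono order.trans[OF v] mult_left_mono) auto
    also have "\<dots> = M + M * (\<delta> + e * (1 + \<delta>))" by (simp add: algebra_simps)
    also have "\<dots> \<le> M + B * (\<delta> + e * (1 + \<delta>))"
      using B assms(2,3) unfolding M_def by (intro add_left_mono mult_right_mono) auto
    finally show ?thesis .
  qed
  moreover have "B * e + B * (\<delta> + e * (1 + \<delta>)) = B * (\<delta> + e * (2 + \<delta>))" by (simp add: algebra_simps)
  ultimately show ?thesis using fx xs unfolding M_def abs_le_iff by linarith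
qed

lemma au_reflexive_limsup:
  fixes xs :: "'a::banach \<Rightarrow>\<^sub>L real" and f :: "nat \<Rightarrow> ('a \<Rightarrow>\<^sub>L real)"
  assumes au: "property_au TYPE('a)" and refl: "reflexive_space TYPE('a)"
    and null: "weak_star_null f" and "\<epsilon> > 0"
  shows "eventually (\<lambda>n. norm (xs + f n) - norm (xs - f n) < \<epsilon>) sequentially"
proof (rule ccontr)
  define I where "I = {n. \<epsilon> \<le> norm (xs + f n) - norm (xs - f n)}"
  assume "\<not> ?thesis"
  then have frequent: "\<exists>n\<ge>N. n \<in> I" for N
    unfolding eventually_sequentially I_def by (auto simp: not_less)
  have lim: "(\<lambda>n. blinfun_apply (f n) y) \<longlonglongrightarrow> 0" for y using null unfolding weak_star_null_def by blast
  obtain B0 where "B0 > 0" and B0: "\<And>n. norm (f n) \<le> B0" using weak_star_null_bounded[OF null] by blast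
  define B where "B = norm xs + B0"
  have "B > 0" unfolding B_def using \<open>B0 > 0\<close> norm_ge_zero[of xs] by linarith
  have B: "norm (xs - f n) \<le> B" for n
    using norm_triangle_ineq4[of xs "f n"] B0[of n] unfolding B_def by linarith
  have "\<forall>n. \<exists>u. norm u \<le> 1 \<and> norm (xs + f n) - \<epsilon> / 4 \<le> blinfun_apply (xs + f n) u"
    using nearly_norming_vector[of "\<epsilon> / 4"] \<open>\<epsilon> > 0\<close> by auto
  then obtain u where "\<forall>n. norm (u n) \<le> 1 \<and> norm (xs + f n) - \<epsilon> / 4 \<le> blinfun_apply (xs + f n) (u n)"
    using choice[OF \<open>\<forall>n. \<exists>u. _\<close>] by blast
  then have u: "\<And>n. norm (u n) \<le> 1"
    and u_norming: "\<And>n. norm (xs + f n) - \<epsilon> / 4 \<le> blinfun_apply (xs + f n) (u n)" by blast+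
  (* A weak cluster point x of the nearly norming vectors along I; the (au) estimate at x makes
     u n - x norm-close to a vector v with ||x - v|| at most about ||x + v||. *)
  obtain x where cluster: "\<And>N G (\<eta>::real). finite G \<Longrightarrow> \<eta> > 0 \<Longrightarrow>
      \<exists>n\<ge>N. n \<in> I \<and> (\<forall>g\<in>G. \<bar>blinfun_apply g (u n) - blinfun_apply g x\<bar> < \<eta>)"
    by (rule reflexive_weak_cluster_point[OF refl u frequent]) (rule that)
  define \<delta> where "\<delta> = \<epsilon> / (4 * B)"
  have \<delta>: "\<delta> > 0" "B * \<delta> = \<epsilon> / 4" using \<open>\<epsilon> > 0\<close> \<open>B > 0\<close> unfolding \<delta>_def by auto
  obtain G C where "finite G" "C \<ge> 0" and perturb: "\<And>y \<eta>.
      (\<And>g. g \<in> G \<Longrightarrow> \<bar>blinfun_apply g (y - x)\<bar> \<le> \<eta>) \<Longrightarrow>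
      \<exists>v. norm (x - v) \<le> (1 + \<delta>) * (norm y + \<eta> * C) \<and> norm (y - x - v) \<le> \<eta> * C"
    by (rule au_weak_perturbation[OF au \<delta>(1), of x]) (rule that; blast)
  define \<eta> where "\<eta> = \<epsilon> / (8 * (4 + B * C * (2 + \<delta>)))"
  have "4 + B * C * (2 + \<delta>) > 0" using \<open>B > 0\<close> \<open>C \<ge> 0\<close> \<delta> by (simp add: add_pos_nonneg)
  then have \<eta>: "\<eta> > 0" "\<eta> * (4 + B * C * (2 + \<delta>)) = \<epsilon> / 8"
    unfolding \<eta>_def using \<open>\<epsilon> > 0\<close> by (auto simp: field_simps)
  obtain N where N: "\<And>n. n \<ge> N \<Longrightarrow> \<bar>blinfun_apply (f n) x\<bar> < \<eta>"
    using lim[of x] \<eta>(1) unfolding LIMSEQ_def dist_real_def by auto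
  obtain n where "n \<ge> N" "n \<in> I"
    and close: "\<forall>g\<in>insert xs G. \<bar>blinfun_apply g (u n) - blinfun_apply g x\<bar> < \<eta>"
    using cluster[of "insert xs G" \<eta> N] \<open>finite G\<close> \<eta>(1) by blast
  then have "\<bar>blinfun_apply g (u n - x)\<bar> \<le> \<eta>" if "g \<in> G" for g
    using that by (auto simp: blinfun.diff_right less_imp_le)
  then obtain v where v: "norm (x - v) \<le> (1 + \<delta>) * (norm (u n) + \<eta> * C)"
    and s: "norm (u n - x - v) \<le> \<eta> * C"
    using perturb by blast
  have "blinfun_apply (xs + f n) (u n) \<le> norm (xs - f n) + 4 * \<eta> + B * (\<delta> + \<eta> * C * (2 + \<delta>))"
    using N[OF \<open>n \<ge> N\<close>] close B[of n] u[of n] v s \<delta>(1) \<eta>(1) \<open>C \<ge> 0\<close>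
    by (intro functional_at_perturbed_vector) (auto simp: blinfun.diff_right less_imp_le)
  moreover have "4 * \<eta> + B * (\<delta> + \<eta> * C * (2 + \<delta>)) = \<epsilon> / 4 + \<eta> * (4 + B * C * (2 + \<delta>))"
    using \<delta>(2) by (simp add: algebra_simps)
  moreover have "\<epsilon> \<le> norm (xs + f n) - norm (xs - f n)" using \<open>n \<in> I\<close> unfolding I_def by simp
  ultimately show False using u_norming[of n] \<eta>(2) \<open>\<epsilon> > 0\<close> by linarith
qed

text \<open>Part (b): in reflexive spaces (au) implies (au\<open>*\<close>); apply the estimate to \<open>f_n\<close> and \<open>-f_n\<close>.\<close>
lemma au_reflexive_imp_au_star:
  assumes au: "property_au TYPE('a::banach)" and refl: "reflexive_space TYPE('a)"
  shows "property_au_star TYPE('a)"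
  unfolding property_au_star_def
proof (intro allI impI)
  fix xs :: "'a \<Rightarrow>\<^sub>L real" and f :: "nat \<Rightarrow> ('a \<Rightarrow>\<^sub>L real)"
  assume null: "weak_star_null f"
  then have null': "weak_star_null (\<lambda>n. - f n)"
    unfolding weak_star_null_def by (auto simp: blinfun.minus_left intro: tendsto_minus_cancel_left[THEN iffD1])
  show "(\<lambda>n. norm (xs + f n) - norm (xs - f n)) \<longlonglongrightarrow> 0"
  proof (rule LIMSEQ_I)
    fix r :: real assume "r > 0"
    from eventually_conj[OF au_reflexive_limsup[OF au refl null \<open>r > 0\<close>]
        au_reflexive_limsup[OF au refl null' \<open>r > 0\<close>, of xs]]
    show "\<exists>N. \<forall>n\<ge>N. norm (norm (xs + f n) - norm (xs - f n) - 0) < r"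
      unfolding eventually_sequentially by (auto simp: abs_less_iff)
  qed
qed

text \<open>Both parts of the proposition; the forward implication in (b) is part (a).\<close>
theorem proposition2p3:
  assumes "separable_space TYPE('a::banach)"
  shows "(property_au_star TYPE('a) \<longrightarrow> property_au TYPE('a))
       \<and> (reflexive_space TYPE('a) \<longrightarrow> (property_au_star TYPE('a) \<longleftrightarrow> property_au TYPE('a)))"
  using au_star_imp_au[OF assms] au_reflexive_imp_au_star[where 'a='a] by blast

end
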